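(* Let $\mu\in(0,1/2]$. For every $c<c_J$, both $R^E_{\text{ext}}(c)<2$ and $R^M_{\text{ext}}(c)<2$.
   Context: $c_J=-1-2\sqrt{\mu(1-\mu)}$. $K(k)=\int_0^{\pi/2}(1-k^2\sin^2\theta)^{-1/2}d\theta$ is the complete elliptic integral of the first kind. $R^E_{\text{ext}}(c)=\frac{\pi}{2}\frac{1}{\sqrt{1-2k_E^2}K(k_E)}$ with $k_E^2=\frac12\big(1-\frac{1-2\mu-c}{\sqrt{c^2-2(1-2\mu)c+1}}\big)$, and $R^M_{\text{ext}}(c)=\frac{\pi}{2}\frac{1}{\sqrt{1-2k_M^2}K(k_M)}$ with $k_M^2=\frac12\big(1+\frac{c+1-2\mu}{\sqrt{c^2+2(1-2\mu)c+1}}\big)$; these are the rotation numbers of the exterior collision orbits of the Euler problem (mass ratio $\mu$) near the Earth and near the Moon. *)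

theory Defs
  imports "HOL-Analysis.Analysis"
begin

definition ellK :: "real \<Rightarrow> real" where
  "ellK k = integral {0..pi/2} (\<lambda>\<theta>. 1 / sqrt (1 - k\<^sup>2 * (sin \<theta>)\<^sup>2))"

definition cJ :: "real \<Rightarrow> real" where
  "cJ \<mu> = -1 - 2 * sqrt (\<mu> * (1 - \<mu>))"

definition kE2 :: "real \<Rightarrow> real \<Rightarrow> real" where
  "kE2 \<mu> c = (1/2) * (1 - (1 - 2*\<mu> - c) / sqrt (c\<^sup>2 - 2*(1 - 2*\<mu>)*c + 1))"

definition kM2 :: "real \<Rightarrow> real \<Rightarrow> real" where
  "kM2 \<mu> c = (1/2) * (1 + (c + 1 - 2*\<mu>) / sqrt (c\<^sup>2 + 2*(1 - 2*\<mu>)*c + 1))"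

definition R_E_ext :: "real \<Rightarrow> real \<Rightarrow> real" where
  "R_E_ext \<mu> c = (pi/2) * (1 / (sqrt (1 - 2 * kE2 \<mu> c) * ellK (sqrt (kE2 \<mu> c))))"

definition R_M_ext :: "real \<Rightarrow> real \<Rightarrow> real" where
  "R_M_ext \<mu> c = (pi/2) * (1 / (sqrt (1 - 2 * kM2 \<mu> c) * ellK (sqrt (kM2 \<mu> c))))"

end

theory Submission
  imports Defs
begin

text \<open>Both moduli have the form \<open>k\<^sup>2 = (1 - x / sqrt (x\<^sup>2 + d)) / 2\<close> with \<open>d = 4\<mu>(1 - \<mu>)\<close>
  and \<open>x = 1 - 2\<mu> - c\<close> (Earth) or \<open>x = 2\<mu> - 1 - c\<close> (Moon); below \<open>c\<^sub>J = -1 - sqrt d\<close> both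
  satisfy \<open>sqrt d < x\<close>. Then \<open>1 - 2k\<^sup>2 = x / sqrt (x\<^sup>2 + d) > 1/2\<close>, so
  \<open>sqrt (1 - 2k\<^sup>2) > 1/2\<close>, while \<open>K(k) \<ge> \<pi>/2\<close> because the integrand is at least 1;
  hence the rotation number is below \<open>(\<pi>/2) / ((1/2) (\<pi>/2)) = 2\<close>.\<close>

lemma ellK_ge_pi_half:
  assumes "k\<^sup>2 < 1"
  shows "pi/2 \<le> ellK k"
proof -
  let ?f = "\<lambda>\<theta>::real. 1 / sqrt (1 - k\<^sup>2 * (sin \<theta>)\<^sup>2)"
  have radicand_bounds: "0 < 1 - k\<^sup>2 * (sin t)\<^sup>2" "1 - k\<^sup>2 * (sin t)\<^sup>2 \<le> 1" for t
  proof -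
    have "k\<^sup>2 * (sin t)\<^sup>2 \<le> k\<^sup>2"
      by (simp add: abs_square_le_1 mult_left_le)
    then show "0 < 1 - k\<^sup>2 * (sin t)\<^sup>2" "1 - k\<^sup>2 * (sin t)\<^sup>2 \<le> 1"
      using assms by auto
  qed
  have integrand_ge_1: "1 \<le> ?f t" for t
    using radicand_bounds[of t] by simp
  have "continuous_on {0..pi/2} ?f"
    using radicand_bounds by (intro continuous_intros) (auto simp: less_imp_neq[symmetric])
  then have "integral {0..pi/2} (\<lambda>_. 1::real) \<le> integral {0..pi/2} ?f"
    by (intro integral_le integrable_continuous_interval integrand_ge_1) auto
  then show ?thesis
    by (simp add: ellK_def)
qed

lemma rotation_number_lt_two:
  fixes x d k2 :: real
  assumes "0 \<le> d" "sqrt d < x"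
    and k2: "k2 = (1/2) * (1 - x / sqrt (x\<^sup>2 + d))"
  shows "(pi/2) * (1 / (sqrt (1 - 2 * k2) * ellK (sqrt k2))) < 2"
proof -
  define r where "r = x / sqrt (x\<^sup>2 + d)"
  have "0 < x"
    using assms(1,2) real_sqrt_ge_zero[of d] by linarith
  then have "d < x\<^sup>2"
    using assms(2) real_sqrt_less_iff[of d "x\<^sup>2"] by simp
  then have "x \<le> sqrt (x\<^sup>2 + d)" "sqrt (x\<^sup>2 + d) < 2 * x"
    using \<open>0 \<le> d\<close> \<open>0 < x\<close> by (auto intro!: real_le_rsqrt real_less_lsqrt simp: power_mult_distrib)
  moreover from this have "0 < sqrt (x\<^sup>2 + d)"
    using \<open>0 < x\<close> by linarith
  ultimately have "1/2 < r" "r \<le> 1"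
    by (auto simp: r_def divide_simps)
  moreover have "k2 = (1 - r) / 2"
    by (simp add: k2 r_def)
  ultimately have "0 \<le> k2" "1 - 2 * k2 = r"
    by auto
  have "1/2 < sqrt r"
    using \<open>1/2 < r\<close> \<open>r \<le> 1\<close> real_less_rsqrt[of "1/2" r] by (simp add: power2_eq_square)
  have "pi/2 \<le> ellK (sqrt k2)"
    using \<open>0 \<le> k2\<close> \<open>1 - 2 * k2 = r\<close> \<open>1/2 < r\<close> by (intro ellK_ge_pi_half) simp
  have "pi/4 < sqrt r * ellK (sqrt k2)"
  proof -
    have "pi/4 < sqrt r * (pi/2)"
      using mult_strict_right_mono[OF \<open>1/2 < sqrt r\<close>, of "pi/2"] pi_gt_zero by simp
    also have "\<dots> \<le> sqrt r * ellK (sqrt k2)"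
      using \<open>pi/2 \<le> ellK (sqrt k2)\<close> \<open>1/2 < r\<close> by (intro mult_left_mono) auto
    finally show ?thesis .
  qed
  moreover from this have "0 < sqrt r * ellK (sqrt k2)"
    using pi_gt_zero by linarith
  ultimately show ?thesis
    using \<open>1 - 2 * k2 = r\<close> by (simp add: divide_simps)
qed

theorem mainTheorem10:
  fixes \<mu> c :: real
  assumes "0 < \<mu>" and "\<mu> \<le> 1/2" and "c < cJ \<mu>"
  shows "R_E_ext \<mu> c < 2 \<and> R_M_ext \<mu> c < 2"
proof -
  define d where "d = 4 * \<mu> * (1 - \<mu>)"
  have "0 \<le> d"
    using assms(1,2) by (simp add: d_def)
  have "sqrt d = 2 * sqrt (\<mu> * (1 - \<mu>))"
    by (simp add: d_def real_sqrt_mult mult.assoc)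
  then have c_below: "c < -1 - sqrt d"
    using assms(3) by (simp add: cJ_def)
  have "kE2 \<mu> c = (1/2) * (1 - (1 - 2*\<mu> - c) / sqrt ((1 - 2*\<mu> - c)\<^sup>2 + d))"
    unfolding kE2_def d_def by (simp add: power2_eq_square algebra_simps)
  moreover have "sqrt d < 1 - 2*\<mu> - c"
    using c_below assms(2) by linarith
  ultimately have "R_E_ext \<mu> c < 2"
    unfolding R_E_ext_def using \<open>0 \<le> d\<close> by (intro rotation_number_lt_two)
  have "kM2 \<mu> c = (1/2) * (1 - (2*\<mu> - 1 - c) / sqrt ((2*\<mu> - 1 - c)\<^sup>2 + d))"
    unfolding kM2_def d_def by (simp add: power2_eq_square algebra_simps diff_divide_distrib)
  moreover have "sqrt d < 2*\<mu> - 1 - c"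
    using c_below assms(1) by linarith
  ultimately have "R_M_ext \<mu> c < 2"
    unfolding R_M_ext_def using \<open>0 \<le> d\<close> by (intro rotation_number_lt_two)
  with \<open>R_E_ext \<mu> c < 2\<close> show ?thesis ..
qed

end
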